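(* Let $G$ be a nilpotent group of class $5$. Then for all $g_1,g_2,h_1,h_2\in G$ and all $n\in\mathbb{N}$, in $G\wedge G$, $$((g_1\wedge h_1)(g_2\wedge h_2))^n = ([g_2,h_2]\wedge [[g_2,h_2],[g_1,h_1]])^{\binom{n}{3}} ([g_1,h_1]\wedge [[g_2,h_2],[g_1,h_1]])^{2\binom{n}{3}+\binom{n}{2}} ([g_2,h_2]\wedge [g_1,h_1])^{\binom{n}{2}} (g_1\wedge h_1)^n (g_2\wedge h_2)^n.$$
   Context: Conventions: ${}^g h = ghg^{-1}$, $[g,h]=ghg^{-1}h^{-1}$; $\binom{n}{r}=0$ if $r>n$. The nonabelian tensor square $G\otimes G$ is generated by symbols $g\otimes h$ subject to $gg'\otimes h=({}^g g'\otimes {}^g h)(g\otimes h)$ and $g\otimes hh'=(g\otimes h)({}^h g\otimes {}^h h')$; the exterior square $G\wedge G$ is its quotient by the subgroup generated by all $x\otimes x$, and $g\wedge h$ denotes the image of $g\otimes h$. *)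

theory Defs
  imports "HOL-Algebra.Algebra"
begin

definition comm :: "('a, 'b) monoid_scheme \<Rightarrow> 'a \<Rightarrow> 'a \<Rightarrow> 'a" where
  "comm G g h = g \<otimes>\<^bsub>G\<^esub> h \<otimes>\<^bsub>G\<^esub> inv\<^bsub>G\<^esub> g \<otimes>\<^bsub>G\<^esub> inv\<^bsub>G\<^esub> h"

definition conj :: "('a, 'b) monoid_scheme \<Rightarrow> 'a \<Rightarrow> 'a \<Rightarrow> 'a" where
  "conj G g h = g \<otimes>\<^bsub>G\<^esub> h \<otimes>\<^bsub>G\<^esub> inv\<^bsub>G\<^esub> g"

text \<open>Lower central series, shifted by one: lcs G 0 = gamma_1(G) = G,
  lcs G (Suc i) = gamma_(i+2)(G) = [G, gamma_(i+1)(G)].\<close>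

fun lcs :: "('a, 'b) monoid_scheme \<Rightarrow> nat \<Rightarrow> 'a set" where
  "lcs G 0 = carrier G"
| "lcs G (Suc i) = generate G {comm G x y | x y. x \<in> carrier G \<and> y \<in> lcs G i}"

definition nilpotent_of_class :: "('a, 'b) monoid_scheme \<Rightarrow> nat \<Rightarrow> bool" where
  "nilpotent_of_class G c \<longleftrightarrow> group G \<and> 1 \<le> c \<and>
     lcs G c = {\<one>\<^bsub>G\<^esub>} \<and> lcs G (c - 1) \<noteq> {\<one>\<^bsub>G\<^esub>}"

text \<open>A (nonabelian) exterior pairing of G into a group L: a map phi on G x G
  satisfying the defining relations of the tensor square together with phi x x = 1.
  The exterior square is the group presented by generators g /\ h and these relations.\<close>

definition exterior_pairing ::
  "('a, 'b) monoid_scheme \<Rightarrow> ('c, 'd) monoid_scheme \<Rightarrow> ('a \<Rightarrow> 'a \<Rightarrow> 'c) \<Rightarrow> bool" where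
  "exterior_pairing G L phi \<longleftrightarrow>
     (\<forall>g\<in>carrier G. \<forall>h\<in>carrier G. phi g h \<in> carrier L) \<and>
     (\<forall>g\<in>carrier G. \<forall>g'\<in>carrier G. \<forall>h\<in>carrier G.
        phi (g \<otimes>\<^bsub>G\<^esub> g') h = phi (conj G g g') (conj G g h) \<otimes>\<^bsub>L\<^esub> phi g h) \<and>
     (\<forall>g\<in>carrier G. \<forall>h\<in>carrier G. \<forall>h'\<in>carrier G.
        phi g (h \<otimes>\<^bsub>G\<^esub> h') = phi g h \<otimes>\<^bsub>L\<^esub> phi (conj G h g) (conj G h h')) \<and>
     (\<forall>x\<in>carrier G. phi x x = \<one>\<^bsub>L\<^esub>)"

text \<open>Words in the generators (g /\ h)^(+-1): (True,g,h) is g /\ h, (False,g,h) its inverse.\<close>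

type_synonym 'a ext_word = "(bool \<times> 'a \<times> 'a) list"

fun eval_word :: "('c, 'd) monoid_scheme \<Rightarrow> ('a \<Rightarrow> 'a \<Rightarrow> 'c) \<Rightarrow> 'a ext_word \<Rightarrow> 'c" where
  "eval_word L phi [] = \<one>\<^bsub>L\<^esub>"
| "eval_word L phi ((b, g, h) # w) =
     (if b then phi g h else inv\<^bsub>L\<^esub> (phi g h)) \<otimes>\<^bsub>L\<^esub> eval_word L phi w"

definition ext_words :: "('a, 'b) monoid_scheme \<Rightarrow> 'a ext_word set" where
  "ext_words G = {w. \<forall>(b, g, h) \<in> set w. g \<in> carrier G \<and> h \<in> carrier G}"

text \<open>Two words represent the same element of the presented group iff they agree under
  every exterior pairing into every group. Quantifying over groups whose elements are sets
  of words suffices (and is exact), since the presented group itself is such a group.\<close>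

definition ext_rel :: "('a, 'b) monoid_scheme \<Rightarrow> ('a ext_word \<times> 'a ext_word) set" where
  "ext_rel G = {(v, w). v \<in> ext_words G \<and> w \<in> ext_words G \<and>
     (\<forall>(L :: 'a ext_word set monoid) phi. group L \<longrightarrow> exterior_pairing G L phi \<longrightarrow>
        eval_word L phi v = eval_word L phi w)}"

definition ext_square :: "('a, 'b) monoid_scheme \<Rightarrow> 'a ext_word set monoid" where
  "ext_square G =
     \<lparr> partial_object.carrier = ext_words G // ext_rel G,
       monoid.mult = (\<lambda>A B. ext_rel G `` {(SOME v. v \<in> A) @ (SOME w. w \<in> B)}),
       monoid.one = ext_rel G `` {[]} \<rparr>"

definition wedge :: "('a, 'b) monoid_scheme \<Rightarrow> 'a \<Rightarrow> 'a \<Rightarrow> 'a ext_word set" where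
  "wedge G g h = ext_rel G `` {[(True, g, h)]}"

end

theory Submission
  imports Defs
begin

(*
  Call phi : G x G -> L a crossed pairing if it satisfies the two defining relations of the
  tensor square. Expanding
  phi (g a) (h b) in two ways shows that phi g h commutes past phi u v up to conjugation by
  [g,h], and this yields phi g h * phi u v = phi [g,h] [u,v] * phi u v * phi g h.

  Put x = phi g1 h1, y = phi g2 h2, a = [g1,h1], b = [g2,h2], c = [b,a] and
  R = phi b a, P = phi b c, Q = phi a c. Then y x = R x y, y R = P R y and x R = Q R x.
  As c lies in gamma_4(G), both [b,c] and [a,c] lie in gamma_6(G) = 1, so P and Q commute
  with x, y, R and with each other, and collecting (x y)^n gives
  P^C(n,3) Q^(2 C(n,3) + C(n,2)) R^C(n,2) x^n y^n.

  The exterior square is a group in which wedge is a crossed pairing, so the identity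
  holds there.
*)

section \<open>Commutator calculus\<close>

context group
begin

lemma m_inv_cancel_left [simp]: "x \<in> carrier G \<Longrightarrow> y \<in> carrier G \<Longrightarrow> x \<otimes> (inv x \<otimes> y) = y"
  by (simp add: m_assoc [symmetric])

lemma inv_m_cancel_left [simp]: "x \<in> carrier G \<Longrightarrow> y \<in> carrier G \<Longrightarrow> inv x \<otimes> (x \<otimes> y) = y"
  by (simp add: m_assoc [symmetric])

lemma m_left_commute:
  "x \<in> carrier G \<Longrightarrow> y \<in> carrier G \<Longrightarrow> z \<in> carrier G \<Longrightarrow> x \<otimes> y = y \<otimes> x \<Longrightarrow>
    x \<otimes> (y \<otimes> z) = y \<otimes> (x \<otimes> z)"
  by (simp add: m_assoc [symmetric])

lemma comm_closed [simp]: "x \<in> carrier G \<Longrightarrow> y \<in> carrier G \<Longrightarrow> comm G x y \<in> carrier G"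
  by (simp add: comm_def)

lemma conj_closed [simp]: "x \<in> carrier G \<Longrightarrow> y \<in> carrier G \<Longrightarrow> conj G x y \<in> carrier G"
  by (simp add: conj_def)

lemma conj_one_left [simp]: "x \<in> carrier G \<Longrightarrow> conj G \<one> x = x"
  by (simp add: conj_def)

lemma conj_one_right [simp]: "x \<in> carrier G \<Longrightarrow> conj G x \<one> = \<one>"
  by (simp add: conj_def)

lemma conj_distrib:
  "x \<in> carrier G \<Longrightarrow> y \<in> carrier G \<Longrightarrow> z \<in> carrier G \<Longrightarrow>
    conj G x (y \<otimes> z) = conj G x y \<otimes> conj G x z"
  by (simp add: conj_def m_assoc)

lemma conj_conj_distrib:
  "x \<in> carrier G \<Longrightarrow> y \<in> carrier G \<Longrightarrow> z \<in> carrier G \<Longrightarrow>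
    conj G (conj G x y) (conj G x z) = conj G x (conj G y z)"
  by (simp add: conj_def m_assoc inv_mult_group)

lemma conj_inv_conj [simp]:
  "x \<in> carrier G \<Longrightarrow> y \<in> carrier G \<Longrightarrow> conj G x (conj G (inv x) y) = y"
  by (simp add: conj_def m_assoc)

lemma conj_eq_comm_mult: "x \<in> carrier G \<Longrightarrow> y \<in> carrier G \<Longrightarrow> conj G x y = comm G x y \<otimes> y"
  by (simp add: comm_def conj_def m_assoc)

lemma comm_eq_one_iff:
  "x \<in> carrier G \<Longrightarrow> y \<in> carrier G \<Longrightarrow> comm G x y = \<one> \<longleftrightarrow> x \<otimes> y = y \<otimes> x"
  unfolding comm_def by (metis inv_closed inv_solve_right' m_closed one_closed l_one)

lemma comm_mult_left:
  "u \<in> carrier G \<Longrightarrow> v \<in> carrier G \<Longrightarrow> z \<in> carrier G \<Longrightarrow>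
    comm G (u \<otimes> v) z = conj G u (comm G v z) \<otimes> comm G u z"
  by (simp add: comm_def conj_def m_assoc inv_mult_group)

lemma comm_comm_eq_one_of_central:
  assumes z: "z \<in> carrier G"
    and central: "\<And>u w. u \<in> carrier G \<Longrightarrow> w \<in> carrier G \<Longrightarrow> w \<otimes> comm G u z = comm G u z \<otimes> w"
    and g: "g \<in> carrier G" and h: "h \<in> carrier G"
  shows "comm G (comm G g h) z = \<one>"
proof -
  let ?f = "\<lambda>u. comm G u z"
  have "?f \<in> hom G G"
  proof (rule homI)
    fix u v assume u: "u \<in> carrier G" and v: "v \<in> carrier G"
    have "conj G u (?f v) = ?f v"
      using central[OF v u] u v z by (simp add: conj_def m_assoc)
    then show "?f (u \<otimes> v) = ?f u \<otimes> ?f v"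
      using u v z central[OF v, of "?f u"] by (simp add: comm_mult_left)
  qed (simp add: z)
  then interpret f: group_hom G G ?f
    by (simp add: group_hom_def group_hom_axioms_def is_group)
  have "?f (comm G g h) = comm G (?f g) (?f h)"
    using g h z unfolding comm_def [of G g h] comm_def [of G "?f g" "?f h"]
    by (simp add: f.hom_inv)
  also have "\<dots> = \<one>"
    using g h z central[OF h, of "?f g"] by (simp add: comm_eq_one_iff)
  finally show ?thesis .
qed

section \<open>The lower central series\<close>

lemma lcs_normal: "lcs G i \<lhd> G"
proof (induction i)
  case 0
  then show ?case by (simp add: normal_self)
next
  case (Suc i)
  then have sub: "lcs G i \<subseteq> carrier G"
    using normal_imp_subgroup subgroup.subset by blast
  show ?case
    unfolding lcs.simps
  proof (rule normal_generateI)
    show "{comm G x y |x y. x \<in> carrier G \<and> y \<in> lcs G i} \<subseteq> carrier G"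
      using sub by auto
  next
    fix c g assume "c \<in> {comm G x y |x y. x \<in> carrier G \<and> y \<in> lcs G i}" and g: "g \<in> carrier G"
    then obtain x y where c: "c = comm G x y" and x: "x \<in> carrier G" and y: "y \<in> lcs G i"
      by blast
    have "g \<otimes> c \<otimes> inv g = comm G (conj G g x) (conj G g y)"
      using x y sub g unfolding c comm_def conj_def by (auto simp: m_assoc inv_mult_group)
    moreover have "conj G g y \<in> lcs G i"
      using Suc y g unfolding conj_def by (simp add: normal_inv_iff)
    ultimately show "g \<otimes> c \<otimes> inv g \<in> {comm G x y |x y. x \<in> carrier G \<and> y \<in> lcs G i}"
      using x g conj_closed by blast
  qed
qed

lemma lcs_subset: "lcs G i \<subseteq> carrier G"
  using lcs_normal normal_imp_subgroup subgroup.subset by blast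

lemma comm_in_lcs_Suc: "x \<in> carrier G \<Longrightarrow> y \<in> lcs G i \<Longrightarrow> comm G x y \<in> lcs G (Suc i)"
  by (auto intro: generate.incl)

lemma comm_commutator_in_lcs:
  assumes z: "z \<in> lcs G i" and g: "g \<in> carrier G" and h: "h \<in> carrier G"
  shows "comm G (comm G g h) z \<in> lcs G (Suc (Suc i))"
proof -
  define N where "N = lcs G (Suc (Suc i))"
  interpret N: normal N G
    unfolding N_def by (rule lcs_normal)
  interpret Q: group "G Mod N"
    by (rule N.factorgroup_is_group)
  let ?p = "\<lambda>a. N #> a"
  interpret p: group_hom G "G Mod N" ?p
    by unfold_locales (rule N.r_coset_hom_Mod)
  have zc: "z \<in> carrier G"
    using z lcs_subset by auto
  have p_comm: "?p (comm G x y) = comm (G Mod N) (?p x) (?p y)"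
    if "x \<in> carrier G" "y \<in> carrier G" for x y
    using that unfolding comm_def by simp
  have p_eq_N_iff: "?p x = N \<longleftrightarrow> x \<in> N" if "x \<in> carrier G" for x
    using that N.rcos_const[OF is_group] rcos_self[OF that N.subgroup_axioms] by auto
  (* In G Mod N every commutator [u, z] is central. *)
  have "comm (G Mod N) (comm (G Mod N) (?p g) (?p h)) (?p z) = \<one>\<^bsub>G Mod N\<^esub>"
  proof (rule Q.comm_comm_eq_one_of_central)
    fix U W assume U: "U \<in> carrier (G Mod N)" and W: "W \<in> carrier (G Mod N)"
    then obtain u w where u: "u \<in> carrier G" "U = ?p u" and w: "w \<in> carrier G" "W = ?p w"
      unfolding FactGroup_def RCOSETS_def by auto
    have "comm G w (comm G u z) \<in> N"
      unfolding N_def using u w z by (intro comm_in_lcs_Suc) auto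
    then have "comm (G Mod N) W (comm (G Mod N) U (?p z)) = \<one>\<^bsub>G Mod N\<^esub>"
      using u w zc by (simp add: p_comm[symmetric] p_eq_N_iff)
    then show "W \<otimes>\<^bsub>G Mod N\<^esub> comm (G Mod N) U (?p z) = comm (G Mod N) U (?p z) \<otimes>\<^bsub>G Mod N\<^esub> W"
      by (rule Q.comm_eq_one_iff [OF W Q.comm_closed [OF U p.hom_closed [OF zc]], THEN iffD1])
  qed (intro p.hom_closed g h zc)+
  then have "?p (comm G (comm G g h) z) = N"
    using g h zc by (simp add: p_comm)
  then show ?thesis
    using g h zc p_eq_N_iff unfolding N_def by simp
qed

end

section \<open>A collection formula\<close>

lemma square_eq_two_choose_two: "n * n = 2 * (n choose 2) + (n::nat)"
  by (induction n) (simp_all add: numeral_2_eq_2 algebra_simps)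

context group
begin

lemma nat_pow_nat_pow_commute:
  "a \<in> carrier G \<Longrightarrow> b \<in> carrier G \<Longrightarrow> a \<otimes> b = b \<otimes> a \<Longrightarrow>
    a [^] (k::nat) \<otimes> b [^] (m::nat) = b [^] m \<otimes> a [^] k"
  by (metis group_commutes_pow nat_pow_closed)

lemma nat_pow_swap_central:
  assumes a: "a \<in> carrier G" and b: "b \<in> carrier G" and c: "c \<in> carrier G"
    and ba: "b \<otimes> a = c \<otimes> a \<otimes> b" and ac: "a \<otimes> c = c \<otimes> a" and bc: "b \<otimes> c = c \<otimes> b"
  shows "b [^] (k::nat) \<otimes> a [^] (m::nat) = c [^] (k * m) \<otimes> a [^] m \<otimes> b [^] k"
proof -
  have b_am: "b \<otimes> a [^] m = c [^] m \<otimes> a [^] m \<otimes> b" for m :: nat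
  proof (induction m)
    case (Suc m)
    have "b \<otimes> a [^] Suc m = c [^] m \<otimes> a [^] m \<otimes> (c \<otimes> a \<otimes> b)"
      using Suc a b c by (simp add: m_assoc [symmetric] ba [symmetric])
    also have "\<dots> = c [^] Suc m \<otimes> a [^] Suc m \<otimes> b"
      using a b c m_left_commute [OF _ c _ group_commutes_pow [OF ac a c, of m]]
      by (simp add: m_assoc)
    finally show ?case .
  qed (simp add: b)
  show ?thesis
  proof (induction k)
    case (Suc k)
    have "b [^] Suc k \<otimes> a [^] m = b [^] k \<otimes> (c [^] m \<otimes> a [^] m \<otimes> b)"
      using a b by (simp add: m_assoc b_am)
    also have "\<dots> = c [^] m \<otimes> (b [^] k \<otimes> a [^] m) \<otimes> b"
      using a b c m_left_commute [OF _ _ _ nat_pow_nat_pow_commute [OF b c bc, of k m]]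
      by (simp add: m_assoc)
    also have "\<dots> = c [^] (Suc k * m) \<otimes> a [^] m \<otimes> b [^] Suc k"
      using a b c Suc by (simp add: m_assoc [symmetric] nat_pow_mult)
    finally show ?case .
  qed (simp add: a)
qed

lemma nat_pow_swap_collect:
  assumes x: "x \<in> carrier G" and y: "y \<in> carrier G" and P: "P \<in> carrier G" and R: "R \<in> carrier G"
    and yx: "y \<otimes> x = R \<otimes> x \<otimes> y" and yR: "y \<otimes> R = P \<otimes> R \<otimes> y"
    and RP: "R \<otimes> P = P \<otimes> R" and yP: "y \<otimes> P = P \<otimes> y"
  shows "y [^] k \<otimes> x = P [^] (k choose 2) \<otimes> R [^] k \<otimes> x \<otimes> y [^] k"
proof (induction k)
  case (Suc k)
  have "y [^] Suc k \<otimes> x = y [^] k \<otimes> R [^] (1::nat) \<otimes> x \<otimes> y"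
    using x y R by (simp add: m_assoc yx)
  also have "\<dots> = P [^] k \<otimes> R \<otimes> (y [^] k \<otimes> x) \<otimes> y"
    using x y P R nat_pow_swap_central [OF R y P yR RP yP, of k 1] by (simp add: m_assoc)
  also have "\<dots> = P [^] k \<otimes> (R \<otimes> P [^] (k choose 2)) \<otimes> R [^] k \<otimes> x \<otimes> y [^] Suc k"
    using x y P R Suc by (simp add: m_assoc)
  also have "\<dots> = P [^] k \<otimes> P [^] (k choose 2) \<otimes> (R \<otimes> R [^] k) \<otimes> x \<otimes> y [^] Suc k"
    using x y P R group_commutes_pow [OF RP [symmetric] P R, of "k choose 2"]
    by (simp add: m_assoc m_left_commute [OF R, of "P [^] (k choose 2)"])
  also have "\<dots> = P [^] (Suc k choose 2) \<otimes> R [^] Suc k \<otimes> x \<otimes> y [^] Suc k"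
    using P R by (simp add: nat_pow_mult numeral_2_eq_2 group_commutes_pow [OF refl R R])
  finally show ?case .
qed (use x y P R in \<open>simp add: numeral_2_eq_2\<close>)

lemma nat_pow_mult_collect:
  assumes x: "x \<in> carrier G" and y: "y \<in> carrier G"
    and P: "P \<in> carrier G" and Q: "Q \<in> carrier G" and R: "R \<in> carrier G"
    and yx: "y \<otimes> x = R \<otimes> x \<otimes> y" and yR: "y \<otimes> R = P \<otimes> R \<otimes> y" and xR: "x \<otimes> R = Q \<otimes> R \<otimes> x"
    and P_commutes: "\<And>u. u \<in> {x, y, R, Q} \<Longrightarrow> u \<otimes> P = P \<otimes> u"
    and Q_commutes: "\<And>u. u \<in> {x, y, R} \<Longrightarrow> u \<otimes> Q = Q \<otimes> u"
  shows "(x \<otimes> y) [^] n = P [^] (n choose 3) \<otimes> Q [^] (2 * (n choose 3) + (n choose 2))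
    \<otimes> R [^] (n choose 2) \<otimes> x [^] n \<otimes> y [^] n"
proof (induction n)
  case (Suc n)
  define a b e where "a = n choose 3" and "b = 2 * (n choose 3) + (n choose 2)" and "e = n choose 2"
  have binomial: "a + e = Suc n choose 3" "b + n * n = 2 * (Suc n choose 3) + (Suc n choose 2)"
    "e + n = Suc n choose 2"
    using square_eq_two_choose_two [of n]
    by (simp_all add: a_def b_def e_def numeral_3_eq_3 numeral_2_eq_2)
  have commute: "R [^] e \<otimes> P [^] e = P [^] e \<otimes> R [^] e"
    "Q [^] b \<otimes> P [^] e = P [^] e \<otimes> Q [^] b"
    "R [^] e \<otimes> Q [^] (n * n) = Q [^] (n * n) \<otimes> R [^] e"
    "x [^] n \<otimes> P [^] e = P [^] e \<otimes> x [^] n"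
    using x P Q R P_commutes Q_commutes by (simp_all add: nat_pow_nat_pow_commute)
  have "(x \<otimes> y) [^] Suc n = P [^] a \<otimes> Q [^] b \<otimes> R [^] e \<otimes> x [^] n \<otimes> (y [^] n \<otimes> x) \<otimes> y"
    using x y P Q R Suc by (simp add: a_def b_def e_def m_assoc)
  also have "\<dots> = P [^] a \<otimes> Q [^] b \<otimes> R [^] e \<otimes> P [^] e \<otimes> (x [^] n \<otimes> R [^] n)
      \<otimes> x \<otimes> y [^] Suc n"
    using x y P Q R P_commutes
    by (simp add: nat_pow_swap_collect [OF x y P R yx yR] e_def [symmetric] m_assoc
        m_left_commute commute)
  also have "\<dots> = P [^] a \<otimes> Q [^] b \<otimes> R [^] e \<otimes> P [^] e \<otimes> Q [^] (n * n) \<otimes> R [^] n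
      \<otimes> x [^] Suc n \<otimes> y [^] Suc n"
    using x y P Q R Q_commutes by (simp add: nat_pow_swap_central [OF R x Q xR] m_assoc)
  also have "\<dots> = P [^] (a + e) \<otimes> Q [^] (b + n * n) \<otimes> R [^] (e + n)
      \<otimes> x [^] Suc n \<otimes> y [^] Suc n"
    using x y P Q R
    by (simp add: m_assoc m_left_commute commute nat_pow_mult [symmetric])
  finally show ?case
    by (simp only: binomial)
qed (use x y P Q R in \<open>simp add: numeral_2_eq_2 numeral_3_eq_3\<close>)

end

section \<open>Crossed pairings\<close>

locale crossed_pairing = G: group G + L: group L
  for G :: "('a, 'b) monoid_scheme" and L :: "('c, 'd) monoid_scheme" +
  fixes phi :: "'a \<Rightarrow> 'a \<Rightarrow> 'c"
  assumes closed [simp]: "g \<in> carrier G \<Longrightarrow> h \<in> carrier G \<Longrightarrow> phi g h \<in> carrier L"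
    and mult_left: "g \<in> carrier G \<Longrightarrow> g' \<in> carrier G \<Longrightarrow> h \<in> carrier G \<Longrightarrow>
      phi (g \<otimes>\<^bsub>G\<^esub> g') h = phi (conj G g g') (conj G g h) \<otimes>\<^bsub>L\<^esub> phi g h"
    and mult_right: "g \<in> carrier G \<Longrightarrow> h \<in> carrier G \<Longrightarrow> h' \<in> carrier G \<Longrightarrow>
      phi g (h \<otimes>\<^bsub>G\<^esub> h') = phi g h \<otimes>\<^bsub>L\<^esub> phi (conj G h g) (conj G h h')"

lemma exterior_pairing_imp_crossed_pairing:
  "group G \<Longrightarrow> group L \<Longrightarrow> exterior_pairing G L phi \<Longrightarrow> crossed_pairing G L phi"
  unfolding exterior_pairing_def crossed_pairing_def crossed_pairing_axioms_def by blast

context crossed_pairing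
begin

lemma one_right [simp]: "g \<in> carrier G \<Longrightarrow> phi g \<one>\<^bsub>G\<^esub> = \<one>\<^bsub>L\<^esub>"
  using mult_right [of g "\<one>\<^bsub>G\<^esub>" "\<one>\<^bsub>G\<^esub>"] by simp

lemma swap_conj:
  assumes g: "g \<in> carrier G" and h: "h \<in> carrier G" and a: "a \<in> carrier G" and b: "b \<in> carrier G"
  shows "phi (conj G g (conj G h a)) (conj G g (conj G h b)) \<otimes>\<^bsub>L\<^esub> phi g h =
    phi g h \<otimes>\<^bsub>L\<^esub> phi (conj G h (conj G g a)) (conj G h (conj G g b))"
proof -
  (* Expand phi (g a) (h b) first on the left and then on the right, and vice versa. *)
  let ?X = "phi (conj G g a) (conj G g h)" and ?Z = "phi (conj G h g) (conj G h b)"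
  have "phi (g \<otimes>\<^bsub>G\<^esub> a) (h \<otimes>\<^bsub>G\<^esub> b) =
    ?X \<otimes>\<^bsub>L\<^esub> (phi (conj G g (conj G h a)) (conj G g (conj G h b)) \<otimes>\<^bsub>L\<^esub> phi g h \<otimes>\<^bsub>L\<^esub> ?Z)"
    using g h a b mult_left [of g a "h \<otimes>\<^bsub>G\<^esub> b"] mult_right [of g h b]
      mult_right [of "conj G g a" "conj G g h" "conj G g b"]
    by (simp add: G.conj_distrib G.conj_conj_distrib L.m_assoc)
  moreover have "phi (g \<otimes>\<^bsub>G\<^esub> a) (h \<otimes>\<^bsub>G\<^esub> b) =
    ?X \<otimes>\<^bsub>L\<^esub> (phi g h \<otimes>\<^bsub>L\<^esub> phi (conj G h (conj G g a)) (conj G h (conj G g b)) \<otimes>\<^bsub>L\<^esub> ?Z)"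
    using g h a b mult_right [of "g \<otimes>\<^bsub>G\<^esub> a" h b] mult_left [of g a h]
      mult_left [of "conj G h g" "conj G h a" "conj G h b"]
    by (simp add: G.conj_distrib G.conj_conj_distrib L.m_assoc)
  ultimately show ?thesis
    using g h a b by simp
qed

lemma commute_eq_conj_comm:
  assumes g: "g \<in> carrier G" and h: "h \<in> carrier G" and u: "u \<in> carrier G" and v: "v \<in> carrier G"
  shows "phi g h \<otimes>\<^bsub>L\<^esub> phi u v =
    phi (conj G (comm G g h) u) (conj G (comm G g h) v) \<otimes>\<^bsub>L\<^esub> phi g h"
proof -
  let ?w = "inv\<^bsub>G\<^esub> (h \<otimes>\<^bsub>G\<^esub> g)"
  have "conj G h (conj G g (conj G ?w x)) = x"
    and "conj G g (conj G h (conj G ?w x)) = conj G (comm G g h) x" if "x \<in> carrier G" for x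
    using g h that by (simp_all add: conj_def comm_def G.m_assoc G.inv_mult_group)
  then show ?thesis
    using swap_conj [of g h "conj G ?w u" "conj G ?w v"] g h u v by simp
qed

lemma conj_conj_eq:
  assumes g: "g \<in> carrier G" and u: "u \<in> carrier G" and v: "v \<in> carrier G"
  shows "phi (conj G g u) (conj G g v) = phi g (comm G u v) \<otimes>\<^bsub>L\<^esub> phi u v"
proof -
  have "phi (conj G g u) (conj G g v) \<otimes>\<^bsub>L\<^esub> phi g v = phi (g \<otimes>\<^bsub>G\<^esub> u) v"
    using g u v by (simp add: mult_left)
  also have "g \<otimes>\<^bsub>G\<^esub> u = u \<otimes>\<^bsub>G\<^esub> conj G (inv\<^bsub>G\<^esub> u) g"
    using g u by (simp add: conj_def G.m_assoc)
  also have "phi \<dots> v = phi g (conj G u v) \<otimes>\<^bsub>L\<^esub> phi u v"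
    using g u v by (simp add: mult_left)
  also have "\<dots> = phi g (comm G u v \<otimes>\<^bsub>G\<^esub> v) \<otimes>\<^bsub>L\<^esub> phi u v"
    using u v by (simp add: G.conj_eq_comm_mult)
  also have "\<dots> = phi g (comm G u v) \<otimes>\<^bsub>L\<^esub>
      (phi (conj G (comm G u v) g) (conj G (comm G u v) v) \<otimes>\<^bsub>L\<^esub> phi u v)"
    using g u v by (simp add: mult_right L.m_assoc)
  also have "\<dots> = phi g (comm G u v) \<otimes>\<^bsub>L\<^esub> phi u v \<otimes>\<^bsub>L\<^esub> phi g v"
    using g u v by (simp add: commute_eq_conj_comm [of u v g v] L.m_assoc)
  finally show ?thesis
    using g u v by simp
qed

lemma commute_eq_comm_comm:
  assumes "g \<in> carrier G" "h \<in> carrier G" "u \<in> carrier G" "v \<in> carrier G"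
  shows "phi g h \<otimes>\<^bsub>L\<^esub> phi u v = phi (comm G g h) (comm G u v) \<otimes>\<^bsub>L\<^esub> phi u v \<otimes>\<^bsub>L\<^esub> phi g h"
  using assms by (simp add: commute_eq_conj_comm conj_conj_eq)

lemma commute_if_comm_eq_one:
  assumes "g \<in> carrier G" "h \<in> carrier G" "u \<in> carrier G" "v \<in> carrier G"
    and "comm G u v = \<one>\<^bsub>G\<^esub>"
  shows "phi g h \<otimes>\<^bsub>L\<^esub> phi u v = phi u v \<otimes>\<^bsub>L\<^esub> phi g h"
  using assms by (simp add: commute_eq_comm_comm)

lemma pow_mult_of_class_5:
  assumes class_5: "lcs G 5 = {\<one>\<^bsub>G\<^esub>}"
    and g1: "g1 \<in> carrier G" and g2: "g2 \<in> carrier G" and h1: "h1 \<in> carrier G" and h2: "h2 \<in> carrier G"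
  shows "(phi g1 h1 \<otimes>\<^bsub>L\<^esub> phi g2 h2) [^]\<^bsub>L\<^esub> (n::nat) =
    (phi (comm G g2 h2) (comm G (comm G g2 h2) (comm G g1 h1))) [^]\<^bsub>L\<^esub> (n choose 3)
    \<otimes>\<^bsub>L\<^esub> (phi (comm G g1 h1) (comm G (comm G g2 h2) (comm G g1 h1)))
         [^]\<^bsub>L\<^esub> (2 * (n choose 3) + (n choose 2))
    \<otimes>\<^bsub>L\<^esub> (phi (comm G g2 h2) (comm G g1 h1)) [^]\<^bsub>L\<^esub> (n choose 2)
    \<otimes>\<^bsub>L\<^esub> (phi g1 h1) [^]\<^bsub>L\<^esub> n
    \<otimes>\<^bsub>L\<^esub> (phi g2 h2) [^]\<^bsub>L\<^esub> n"
proof -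
  define a b c where "a = comm G g1 h1" and "b = comm G g2 h2" and "c = comm G b a"
  have a: "a \<in> carrier G" and b: "b \<in> carrier G" and c: "c \<in> carrier G"
    using g1 g2 h1 h2 by (simp_all add: a_def b_def c_def)
  (* lcs G i is gamma_(i+1): a lies in gamma_2 and c in gamma_4, so [b,c], [a,c] lie in gamma_6. *)
  have five: "(5::nat) = Suc (Suc (Suc (Suc (Suc 0))))"
    by simp
  have "a \<in> lcs G (Suc 0)"
    unfolding a_def by (rule G.comm_in_lcs_Suc) (simp_all add: g1 h1)
  then have "c \<in> lcs G (Suc (Suc (Suc 0)))"
    unfolding c_def b_def using g2 h2 by (rule G.comm_commutator_in_lcs)
  then have "comm G b c \<in> lcs G 5" and "comm G a c \<in> lcs G 5"
    unfolding five a_def b_def using g1 g2 h1 h2 by (simp_all only: G.comm_commutator_in_lcs)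
  then have bc: "comm G b c = \<one>\<^bsub>G\<^esub>" and ac: "comm G a c = \<one>\<^bsub>G\<^esub>"
    using class_5 by simp_all
  show ?thesis
    unfolding a_def [symmetric] b_def [symmetric] c_def [symmetric]
  proof (rule L.nat_pow_mult_collect)
    show "phi g2 h2 \<otimes>\<^bsub>L\<^esub> phi g1 h1 = phi b a \<otimes>\<^bsub>L\<^esub> phi g1 h1 \<otimes>\<^bsub>L\<^esub> phi g2 h2"
      using g1 g2 h1 h2 by (simp add: commute_eq_comm_comm a_def b_def)
    show "phi g2 h2 \<otimes>\<^bsub>L\<^esub> phi b a = phi b c \<otimes>\<^bsub>L\<^esub> phi b a \<otimes>\<^bsub>L\<^esub> phi g2 h2"
      using g2 h2 a b by (simp add: commute_eq_comm_comm b_def c_def)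
    show "phi g1 h1 \<otimes>\<^bsub>L\<^esub> phi b a = phi a c \<otimes>\<^bsub>L\<^esub> phi b a \<otimes>\<^bsub>L\<^esub> phi g1 h1"
      using g1 h1 a b by (simp add: commute_eq_comm_comm a_def c_def)
    show "u \<otimes>\<^bsub>L\<^esub> phi b c = phi b c \<otimes>\<^bsub>L\<^esub> u"
      if "u \<in> {phi g1 h1, phi g2 h2, phi b a, phi a c}" for u
      using that g1 g2 h1 h2 a b c bc by (auto intro: commute_if_comm_eq_one)
    show "u \<otimes>\<^bsub>L\<^esub> phi a c = phi a c \<otimes>\<^bsub>L\<^esub> u"
      if "u \<in> {phi g1 h1, phi g2 h2, phi b a}" for u
      using that g1 g2 h1 h2 a b c ac by (auto intro: commute_if_comm_eq_one)
  qed (use g1 g2 h1 h2 a b c in simp_all)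
qed

end

section \<open>The exterior square as a group\<close>

definition inv_word :: "'a ext_word \<Rightarrow> 'a ext_word" where
  "inv_word v = rev (map (\<lambda>(b, g, h). (\<not> b, g, h)) v)"

lemma ext_words_Nil [simp]: "[] \<in> ext_words G"
  by (simp add: ext_words_def)

lemma ext_words_Cons [simp]:
  "(b, g, h) # v \<in> ext_words G \<longleftrightarrow> g \<in> carrier G \<and> h \<in> carrier G \<and> v \<in> ext_words G"
  by (simp add: ext_words_def)

lemma ext_words_append [simp]: "v @ w \<in> ext_words G \<longleftrightarrow> v \<in> ext_words G \<and> w \<in> ext_words G"
  unfolding ext_words_def by (simp only: mem_Collect_eq set_append ball_Un)

lemma ext_words_inv_word [simp]: "inv_word v \<in> ext_words G \<longleftrightarrow> v \<in> ext_words G"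
  by (auto simp: ext_words_def inv_word_def)

context crossed_pairing
begin

lemma eval_word_closed [simp]: "v \<in> ext_words G \<Longrightarrow> eval_word L phi v \<in> carrier L"
  by (induction v) auto

lemma eval_word_append:
  "v \<in> ext_words G \<Longrightarrow> w \<in> ext_words G \<Longrightarrow>
    eval_word L phi (v @ w) = eval_word L phi v \<otimes>\<^bsub>L\<^esub> eval_word L phi w"
  by (induction v) (auto simp: L.m_assoc)

lemma eval_inv_word:
  "v \<in> ext_words G \<Longrightarrow> eval_word L phi (inv_word v) = inv\<^bsub>L\<^esub> eval_word L phi v"
proof (induction v)
  case (Cons l v)
  obtain b g h where l: "l = (b, g, h)"
    by (cases l)
  have "inv_word (l # v) = inv_word v @ [(\<not> b, g, h)]"
    by (simp add: inv_word_def l)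
  then show ?case
    using Cons l by (simp add: eval_word_append L.inv_mult_group)
qed (simp add: inv_word_def)

end

context group
begin

lemma ext_rel_intro:
  assumes "v \<in> ext_words G" "w \<in> ext_words G"
    and "\<And>(L :: 'a ext_word set monoid) phi. crossed_pairing G L phi \<Longrightarrow>
      exterior_pairing G L phi \<Longrightarrow> eval_word L phi v = eval_word L phi w"
  shows "(v, w) \<in> ext_rel G"
  using assms exterior_pairing_imp_crossed_pairing [OF is_group] unfolding ext_rel_def by blast

lemma equiv_ext_rel: "equiv (ext_words G) (ext_rel G)"
  by (rule equivI) (auto simp: ext_rel_def refl_on_def sym_def trans_def)

lemma ext_square_class_eq:
  assumes "v \<in> ext_words G" "w \<in> ext_words G"
    and "\<And>(L :: 'a ext_word set monoid) phi. crossed_pairing G L phi \<Longrightarrow>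
      exterior_pairing G L phi \<Longrightarrow> eval_word L phi v = eval_word L phi w"
  shows "ext_rel G `` {v} = ext_rel G `` {w}"
  using assms by (intro equiv_class_eq [OF equiv_ext_rel] ext_rel_intro)

lemma ext_rel_append:
  assumes v: "(v, v') \<in> ext_rel G" and w: "(w, w') \<in> ext_rel G"
  shows "(v @ w, v' @ w') \<in> ext_rel G"
proof (rule ext_rel_intro)
  fix L :: "'a ext_word set monoid" and phi
  assume "crossed_pairing G L phi" and "exterior_pairing G L phi"
  then interpret crossed_pairing G L phi
    by simp
  from v w \<open>exterior_pairing G L phi\<close>
  have "eval_word L phi v = eval_word L phi v'" and "eval_word L phi w = eval_word L phi w'"
    unfolding ext_rel_def using L.is_group by auto
  with v w show "eval_word L phi (v @ w) = eval_word L phi (v' @ w')"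
    by (auto simp: ext_rel_def eval_word_append)
qed (use v w in \<open>auto simp: ext_rel_def\<close>)

lemma ext_square_mult:
  assumes v: "v \<in> ext_words G" and w: "w \<in> ext_words G"
  shows "ext_rel G `` {v} \<otimes>\<^bsub>ext_square G\<^esub> ext_rel G `` {w} = ext_rel G `` {v @ w}"
proof -
  (* The product uses arbitrary representatives chosen by SOME. *)
  have some_rel: "(u, SOME u'. u' \<in> ext_rel G `` {u}) \<in> ext_rel G" if "u \<in> ext_words G" for u
    using someI [of "\<lambda>u'. u' \<in> ext_rel G `` {u}" u] equiv_ext_rel that
    by (auto dest: equiv_class_self [of "ext_words G"])
  have "(v @ w, (SOME v'. v' \<in> ext_rel G `` {v}) @ (SOME w'. w' \<in> ext_rel G `` {w})) \<in> ext_rel G"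
    using v w by (intro ext_rel_append some_rel)
  then show ?thesis
    unfolding ext_square_def by (simp add: equiv_class_eq [OF equiv_ext_rel])
qed

lemma group_ext_square: "group (ext_square G)"
proof (rule groupI)
  have carrier: "carrier (ext_square G) = ext_words G // ext_rel G"
    by (simp add: ext_square_def)
  have one: "\<one>\<^bsub>ext_square G\<^esub> = ext_rel G `` {[]}"
    by (simp add: ext_square_def)
  show "\<one>\<^bsub>ext_square G\<^esub> \<in> carrier (ext_square G)"
    by (simp add: carrier one quotientI)
  fix A B C assume "A \<in> carrier (ext_square G)" "B \<in> carrier (ext_square G)" "C \<in> carrier (ext_square G)"
  then obtain u v w where u: "u \<in> ext_words G" "A = ext_rel G `` {u}"
    and "v \<in> ext_words G" "B = ext_rel G `` {v}" and "w \<in> ext_words G" "C = ext_rel G `` {w}"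
    unfolding carrier by (metis quotientE)
  then show "A \<otimes>\<^bsub>ext_square G\<^esub> B \<in> carrier (ext_square G)"
    and "A \<otimes>\<^bsub>ext_square G\<^esub> B \<otimes>\<^bsub>ext_square G\<^esub> C = A \<otimes>\<^bsub>ext_square G\<^esub> (B \<otimes>\<^bsub>ext_square G\<^esub> C)"
    and "\<one>\<^bsub>ext_square G\<^esub> \<otimes>\<^bsub>ext_square G\<^esub> A = A"
    by (simp_all add: carrier one ext_square_mult quotientI)
  have "ext_rel G `` {inv_word u @ u} = ext_rel G `` {[]}"
  proof (rule ext_square_class_eq)
    fix L :: "'a ext_word set monoid" and phi
    assume "crossed_pairing G L phi"
    then interpret crossed_pairing G L phi .
    show "eval_word L phi (inv_word u @ u) = eval_word L phi []"
      using u by (simp add: eval_word_append eval_inv_word)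
  qed (simp_all add: u)
  then show "\<exists>B\<in>carrier (ext_square G). B \<otimes>\<^bsub>ext_square G\<^esub> A = \<one>\<^bsub>ext_square G\<^esub>"
    using u by (intro bexI [of _ "ext_rel G `` {inv_word u}"]) (simp_all add: carrier one ext_square_mult quotientI)
qed

lemma wedge_closed: "g \<in> carrier G \<Longrightarrow> h \<in> carrier G \<Longrightarrow> wedge G g h \<in> carrier (ext_square G)"
  by (simp add: wedge_def ext_square_def quotientI)

lemma wedge_mult_wedge:
  "g \<in> carrier G \<Longrightarrow> h \<in> carrier G \<Longrightarrow> g' \<in> carrier G \<Longrightarrow> h' \<in> carrier G \<Longrightarrow>
    wedge G g h \<otimes>\<^bsub>ext_square G\<^esub> wedge G g' h' = ext_rel G `` {[(True, g, h), (True, g', h')]}"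
  using ext_square_mult [of "[(True, g, h)]" "[(True, g', h')]"] by (simp add: wedge_def)

lemma crossed_pairing_wedge: "crossed_pairing G (ext_square G) (wedge G)"
proof (intro crossed_pairing.intro crossed_pairing_axioms.intro is_group group_ext_square wedge_closed)
  fix g g' h assume g: "g \<in> carrier G" and g': "g' \<in> carrier G" and h: "h \<in> carrier G"
  have "wedge G (g \<otimes> g') h = ext_rel G `` {[(True, conj G g g', conj G g h), (True, g, h)]}"
    unfolding wedge_def
  proof (rule ext_square_class_eq)
    fix L :: "'a ext_word set monoid" and phi
    assume "crossed_pairing G L phi"
    then interpret crossed_pairing G L phi .
    show "eval_word L phi [(True, g \<otimes> g', h)] =
      eval_word L phi [(True, conj G g g', conj G g h), (True, g, h)]"
      using g g' h by (simp add: mult_left)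
  qed (use g g' h in simp_all)
  then show "wedge G (g \<otimes> g') h = wedge G (conj G g g') (conj G g h) \<otimes>\<^bsub>ext_square G\<^esub> wedge G g h"
    using g g' h by (simp add: wedge_mult_wedge)
next
  fix g h h' assume g: "g \<in> carrier G" and h: "h \<in> carrier G" and h': "h' \<in> carrier G"
  have "wedge G g (h \<otimes> h') = ext_rel G `` {[(True, g, h), (True, conj G h g, conj G h h')]}"
    unfolding wedge_def
  proof (rule ext_square_class_eq)
    fix L :: "'a ext_word set monoid" and phi
    assume "crossed_pairing G L phi"
    then interpret crossed_pairing G L phi .
    show "eval_word L phi [(True, g, h \<otimes> h')] =
      eval_word L phi [(True, g, h), (True, conj G h g, conj G h h')]"
      using g h h' by (simp add: mult_right)
  qed (use g h h' in simp_all)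
  then show "wedge G g (h \<otimes> h') = wedge G g h \<otimes>\<^bsub>ext_square G\<^esub> wedge G (conj G h g) (conj G h h')"
    using g h h' by (simp add: wedge_mult_wedge)
qed

end

theorem theorem3p8:
  fixes G :: "('a, 'b) monoid_scheme"
  assumes "nilpotent_of_class G 5"
    and "g1 \<in> carrier G" "g2 \<in> carrier G" "h1 \<in> carrier G" "h2 \<in> carrier G"
  shows "(wedge G g1 h1 \<otimes>\<^bsub>ext_square G\<^esub> wedge G g2 h2) [^]\<^bsub>ext_square G\<^esub> (n::nat) =
    (wedge G (comm G g2 h2) (comm G (comm G g2 h2) (comm G g1 h1))) [^]\<^bsub>ext_square G\<^esub> (n choose 3)
    \<otimes>\<^bsub>ext_square G\<^esub> (wedge G (comm G g1 h1) (comm G (comm G g2 h2) (comm G g1 h1)))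
         [^]\<^bsub>ext_square G\<^esub> (2 * (n choose 3) + (n choose 2))
    \<otimes>\<^bsub>ext_square G\<^esub> (wedge G (comm G g2 h2) (comm G g1 h1)) [^]\<^bsub>ext_square G\<^esub> (n choose 2)
    \<otimes>\<^bsub>ext_square G\<^esub> (wedge G g1 h1) [^]\<^bsub>ext_square G\<^esub> n
    \<otimes>\<^bsub>ext_square G\<^esub> (wedge G g2 h2) [^]\<^bsub>ext_square G\<^esub> n"
proof -
  from assms(1) have "group G" and class_5: "lcs G 5 = {\<one>\<^bsub>G\<^esub>}"
    by (simp_all add: nilpotent_of_class_def)
  interpret G: group G
    by fact
  interpret crossed_pairing G "ext_square G" "wedge G"
    by (rule G.crossed_pairing_wedge)
  show ?thesis
    by (rule pow_mult_of_class_5 [OF class_5 assms(2-5)])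
qed

end
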